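(* For every $\mathcal{L}_{\text{Ł}}^{\Box}$-formula $\varphi$: $\varphi$ is $\mathsf{K(Ł)}$-valid if and only if $\varphi^{*}$ is $\mathsf{K(A^c)}$-valid, where $^{*}$ is the translation defined in the context.
   Context: Formulas are built over a countably infinite set $\mathrm{Var}$ of variables. $\mathcal{L}_{\text{Ł}}^{\Box}$ has a binary connective $\supset$ and unary connectives $\sim$ and $\Box$. A $\mathsf{K(Ł)}$-model $\langle W,R,V\rangle$ consists of a nonempty set $W$, $R\subseteq W\times W$, and $V\colon\mathrm{Var}\times W\to[0,1]$ extended by $V(\sim\varphi,x)=1-V(\varphi,x)$, $V(\varphi\supset\psi,x)=\min(1,1-V(\varphi,x)+V(\psi,x))$, $V(\Box\varphi,x)=\inf_{[0,1]}\{V(\varphi,y):Rxy\}$ (infimum taken in $[0,1]$, so the empty infimum is $1$). A formula is $\mathsf{K(Ł)}$-valid if $V(\varphi,x)=1$ for all models and all $x$. The language $\mathcal{L}_{A^c}^{\Box}$ has binary $\wedge,\vee,\&,\to$, constants $\overline{0}$ and $c$, and unary $\Box$; $\neg\varphi:=\varphi\to\overline{0}$. A $\mathsf{K(A^c)}$-model $\langle W,R,V,c^{\mathfrak{M}}\rangle$ consists of a nonempty $W$, $R\subseteq W\times W$, a real $c^{\mathfrak{M}}$, and $V\colon\mathrm{Var}\times W\to[-r,r]$ for some real $r\ge0$, extended by: $\wedge$ as $\min$, $\vee$ as $\max$, $\&$ as $+$, $V(\varphi\to\psi,x)=V(\psi,x)-V(\varphi,x)$, $V(\overline{0},x)=0$,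 $V(c,x)=c^{\mathfrak{M}}$, $V(\Box\varphi,x)=\inf_{\mathbb{R}}\{V(\varphi,y):Rxy\}$ with the empty infimum equal to $0$. A formula is $\mathsf{K(A^c)}$-valid if $V(\varphi,x)\ge 0$ for all such models and all $x$. Let $\bot:=c\wedge\neg c$. The translation $^{*}$ from $\mathcal{L}_{\text{Ł}}^{\Box}$-formulas to $\mathcal{L}_{A^c}^{\Box}$-formulas is: $p^{*}=(p\wedge\overline{0})\vee\bot$ for $p\in\mathrm{Var}$, $(\sim\varphi)^{*}=\varphi^{*}\to\bot$, $(\varphi\supset\psi)^{*}=(\varphi^{*}\to\psi^{*})\wedge\overline{0}$, $(\Box\varphi)^{*}=\Box\varphi^{*}$. *)

theory Defs
  imports Complex_Main
begin

type_synonym var = nat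

datatype fmL = LVar var | LNeg fmL | LImp fmL fmL | LBox fmL

datatype fmA = AVar var | AAnd fmA fmA | AOr fmA fmA | AConj fmA fmA | AImp fmA fmA
  | AZero | AC | ABox fmA

definition ANeg :: "fmA \<Rightarrow> fmA" where "ANeg \<phi> = AImp \<phi> AZero"

definition ABot :: fmA where "ABot = AAnd AC (ANeg AC)"

fun tr :: "fmL \<Rightarrow> fmA" where
  "tr (LVar p) = AOr (AAnd (AVar p) AZero) ABot"
| "tr (LNeg \<phi>) = AImp (tr \<phi>) ABot"
| "tr (LImp \<phi> \<psi>) = AAnd (AImp (tr \<phi>) (tr \<psi>)) AZero"
| "tr (LBox \<phi>) = ABox (tr \<phi>)"

text \<open>Infimum in [0,1] with empty infimum 1: Inf of (S \<union> {1}) for S \<subseteq> [0,1].\<close>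
fun evalL :: "'w set \<Rightarrow> ('w \<Rightarrow> 'w \<Rightarrow> bool) \<Rightarrow> (var \<Rightarrow> 'w \<Rightarrow> real) \<Rightarrow> fmL \<Rightarrow> 'w \<Rightarrow> real" where
  "evalL W R V (LVar p) x = V p x"
| "evalL W R V (LNeg \<phi>) x = 1 - evalL W R V \<phi> x"
| "evalL W R V (LImp \<phi> \<psi>) x = min 1 (1 - evalL W R V \<phi> x + evalL W R V \<psi> x)"
| "evalL W R V (LBox \<phi>) x = Inf (insert 1 {evalL W R V \<phi> y | y. y \<in> W \<and> R x y})"

definition modelL :: "'w set \<Rightarrow> ('w \<Rightarrow> 'w \<Rightarrow> bool) \<Rightarrow> (var \<Rightarrow> 'w \<Rightarrow> real) \<Rightarrow> bool" where
  "modelL W R V \<longleftrightarrow> W \<noteq> {} \<and> (\<forall>x y. R x y \<longrightarrow> x \<in> W \<and> y \<in> W)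
     \<and> (\<forall>p. \<forall>x\<in>W. 0 \<le> V p x \<and> V p x \<le> 1)"

definition validKL :: "'w itself \<Rightarrow> fmL \<Rightarrow> bool" where
  "validKL _ \<phi> \<longleftrightarrow> (\<forall>(W::'w set) R V. modelL W R V \<longrightarrow> (\<forall>x\<in>W. evalL W R V \<phi> x = 1))"

fun evalA :: "'w set \<Rightarrow> ('w \<Rightarrow> 'w \<Rightarrow> bool) \<Rightarrow> (var \<Rightarrow> 'w \<Rightarrow> real) \<Rightarrow> real \<Rightarrow> fmA \<Rightarrow> 'w \<Rightarrow> real" where
  "evalA W R V c (AVar p) x = V p x"
| "evalA W R V c (AAnd \<phi> \<psi>) x = min (evalA W R V c \<phi> x) (evalA W R V c \<psi> x)"
| "evalA W R V c (AOr \<phi> \<psi>) x = max (evalA W R V c \<phi> x) (evalA W R V c \<psi> x)"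
| "evalA W R V c (AConj \<phi> \<psi>) x = evalA W R V c \<phi> x + evalA W R V c \<psi> x"
| "evalA W R V c (AImp \<phi> \<psi>) x = evalA W R V c \<psi> x - evalA W R V c \<phi> x"
| "evalA W R V c AZero x = 0"
| "evalA W R V c AC x = c"
| "evalA W R V c (ABox \<phi>) x =
     (if {y \<in> W. R x y} = {} then 0 else Inf {evalA W R V c \<phi> y | y. y \<in> W \<and> R x y})"

definition modelA :: "'w set \<Rightarrow> ('w \<Rightarrow> 'w \<Rightarrow> bool) \<Rightarrow> (var \<Rightarrow> 'w \<Rightarrow> real) \<Rightarrow> bool" where
  "modelA W R V \<longleftrightarrow> W \<noteq> {} \<and> (\<forall>x y. R x y \<longrightarrow> x \<in> W \<and> y \<in> W)
     \<and> (\<exists>r::real. r \<ge> 0 \<and> (\<forall>p. \<forall>x\<in>W. -r \<le> V p x \<and> V p x \<le> r))"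

definition validKA :: "'w itself \<Rightarrow> fmA \<Rightarrow> bool" where
  "validKA _ \<phi> \<longleftrightarrow> (\<forall>(W::'w set) R V (c::real). modelA W R V \<longrightarrow> (\<forall>x\<in>W. evalA W R V c \<phi> x \<ge> 0))"

end

theory Submission
  imports Defs
begin

text \<open>
  Under \<open>t \<mapsto> s (t - 1)\<close> with \<open>s = |c|\<close>, the Lukasiewicz connectives on \<open>[0,1]\<close> become
  their translations on \<open>[-s, 0]\<close>: \<open>\<bottom>\<close> evaluates to \<open>-s\<close>, \<open>\<sim>\<close> and \<open>\<supset>\<close> become affine
  expressions, and \<open>\<box>\<close> commutes with this monotone continuous map.  So an abelian model whose
  atoms, clamped to \<open>[-s, 0]\<close>, are written as \<open>s (v - 1)\<close> gives \<open>tr \<phi>\<close> the value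
  \<open>s (v(\<phi>) - 1)\<close>, which is \<open>\<ge> 0\<close> when \<open>v(\<phi>) = 1\<close>.  Conversely a Lukasiewicz model \<open>V\<close> is
  recovered from the abelian model \<open>V - 1\<close> with \<open>c = 1\<close>, where \<open>s = 1\<close>.
\<close>

lemma cInf_image_scaled_shift:
  fixes S :: "real set" and s :: real
  assumes "S \<noteq> {}" "bdd_below S" "s \<ge> 0"
  shows "Inf ((\<lambda>t. s * (t - 1)) ` S) = s * (Inf S - 1)"
proof -
  have "mono (\<lambda>t::real. s * (t - 1))"
    using assms(3) by (auto simp: mono_def intro: mult_left_mono)
  moreover have "continuous (at_right (Inf S)) (\<lambda>t::real. s * (t - 1))"
    by (intro continuous_intros)
  ultimately show ?thesis
    using continuous_at_Inf_mono[OF _ _ assms(1,2)] by metis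
qed

lemma min_scaled_Lukasiewicz_imp:
  fixes s a b :: real
  assumes "s \<ge> 0"
  shows "min (s * (b - 1) - s * (a - 1)) 0 = s * (min 1 (1 - a + b) - 1)"
proof (cases "b \<le> a")
  case True
  then have "s * (b - a) \<le> 0" using assms by (simp add: mult_nonneg_nonpos)
  then show ?thesis using True by (simp add: algebra_simps)
next
  case False
  then have "s * (b - a) \<ge> 0" using assms by simp
  then show ?thesis using False by (simp add: algebra_simps)
qed

lemma evalA_ABot [simp]: "evalA W R V c ABot x = - \<bar>c\<bar>"
  by (auto simp: ABot_def ANeg_def)

lemma evalL_unit_interval:
  assumes "\<forall>p. \<forall>x\<in>W. 0 \<le> V p x \<and> V p x \<le> 1" and "x \<in> W"
  shows "0 \<le> evalL W R V \<phi> x \<and> evalL W R V \<phi> x \<le> 1"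
  using assms(2)
proof (induction \<phi> arbitrary: x)
  case (LBox \<phi>)
  let ?S = "insert 1 {evalL W R V \<phi> y | y. y \<in> W \<and> R x y}"
  have "bdd_below ?S" using LBox.IH by (auto intro: bdd_belowI[of _ 0])
  then have "Inf ?S \<le> 1" by (rule cInf_lower[rotated]) simp
  moreover have "0 \<le> Inf ?S" using LBox.IH by (auto intro: cInf_greatest)
  ultimately show ?case by simp
qed (use assms(1) in auto)

lemma evalA_tr_eq_scaled_evalL:
  assumes V'_unit: "\<forall>p. \<forall>x\<in>W. 0 \<le> V' p x \<and> V' p x \<le> 1"
    and atoms: "\<forall>p. \<forall>x\<in>W. max (min (V p x) 0) (- \<bar>c\<bar>) = \<bar>c\<bar> * (V' p x - 1)"
    and "x \<in> W"
  shows "evalA W R V c (tr \<phi>) x = \<bar>c\<bar> * (evalL W R V' \<phi> x - 1)"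
  using assms(3)
proof (induction \<phi> arbitrary: x)
  case (LVar p)
  then show ?case using atoms by simp
next
  case (LNeg \<phi>)
  then show ?case by (simp add: algebra_simps)
next
  case (LImp \<phi> \<psi>)
  then show ?case by (simp add: min_scaled_Lukasiewicz_imp)
next
  case (LBox \<phi>)
  define S where "S = {evalL W R V' \<phi> y | y. y \<in> W \<and> R x y}"
  have S_unit: "\<forall>t\<in>S. 0 \<le> t \<and> t \<le> 1"
    unfolding S_def using evalL_unit_interval[OF V'_unit] by auto
  show ?case
  proof (cases "{y \<in> W. R x y} = {}")
    case True
    then have "{evalL W R V' \<phi> y | y. y \<in> W \<and> R x y} = {}" by auto
    then have "evalL W R V' (LBox \<phi>) x = 1" by (simp only: evalL.simps) simp
    then show ?thesis using True by simp
  next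
    case False
    then have "S \<noteq> {}" unfolding S_def by auto
    moreover have bdd: "bdd_below S" using S_unit by (auto intro: bdd_belowI)
    ultimately have "Inf S \<le> 1" using S_unit by (meson cInf_lower ex_in_conv order_trans)
    then have "evalL W R V' (LBox \<phi>) x = Inf S"
      using cInf_insert[OF \<open>S \<noteq> {}\<close> bdd] by (simp add: S_def inf_absorb2)
    moreover have "{evalA W R V c (tr \<phi>) y | y. y \<in> W \<and> R x y}
        = {\<bar>c\<bar> * (evalL W R V' \<phi> y - 1) | y. y \<in> W \<and> R x y}"
      by (intro Collect_cong ex_cong1) (use LBox.IH in auto)
    then have "{evalA W R V c (tr \<phi>) y | y. y \<in> W \<and> R x y} = (\<lambda>t. \<bar>c\<bar> * (t - 1)) ` S"
      unfolding S_def by auto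
    moreover have "evalA W R V c (tr (LBox \<phi>)) x = Inf {evalA W R V c (tr \<phi>) y | y. y \<in> W \<and> R x y}"
      using False by (simp only: tr.simps evalA.simps if_False)
    ultimately show ?thesis
      using cInf_image_scaled_shift[OF \<open>S \<noteq> {}\<close> bdd] by simp
  qed
qed

lemma validKA_tr_if_validKL:
  assumes "validKL TYPE('w) \<phi>"
  shows "validKA TYPE('w) (tr \<phi>)"
  unfolding validKA_def
proof (intro allI impI ballI)
  fix W :: "'w set" and R V c x
  assume M: "modelA W R V" and x: "x \<in> W"
  define s :: real where "s = \<bar>c\<bar>"
  define V' where "V' = (\<lambda>p x. 1 + max (min (V p x) 0) (- s) / s)"
  \<comment> \<open>when \<open>s = 0\<close> the clamped atom is \<open>0\<close> and \<open>V'\<close> is constantly \<open>1\<close> (as \<open>x / 0 = 0\<close>)\<close>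
  have "0 \<le> 1 + max (min (V p y) 0) (- s) / s \<and> 1 + max (min (V p y) 0) (- s) / s \<le> 1" for p y
    using abs_ge_zero[of c] unfolding s_def[symmetric]
    by (cases "s = 0") (auto simp: field_simps less_le)
  then have V'_unit: "\<forall>p. \<forall>x\<in>W. 0 \<le> V' p x \<and> V' p x \<le> 1"
    by (simp add: V'_def)
  have atoms: "\<forall>p. \<forall>x\<in>W. max (min (V p x) 0) (- \<bar>c\<bar>) = \<bar>c\<bar> * (V' p x - 1)"
    by (cases "s = 0") (auto simp: V'_def s_def)
  have "modelL W R V'" using M V'_unit by (simp add: modelL_def modelA_def)
  then have "evalL W R V' \<phi> x = 1" using assms x by (simp add: validKL_def)
  then show "0 \<le> evalA W R V c (tr \<phi>) x"
    using evalA_tr_eq_scaled_evalL[OF V'_unit atoms x] by simp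
qed

lemma validKL_if_validKA_tr:
  assumes "validKA TYPE('w) (tr \<phi>)"
  shows "validKL TYPE('w) \<phi>"
  unfolding validKL_def
proof (intro allI impI ballI)
  fix W :: "'w set" and R V x
  assume M: "modelL W R V" and x: "x \<in> W"
  have V_unit: "\<forall>p. \<forall>x\<in>W. 0 \<le> V p x \<and> V p x \<le> 1" using M by (simp add: modelL_def)
  have "modelA W R (\<lambda>p y. V p y - 1)"
    using M V_unit unfolding modelL_def modelA_def
    by (intro conjI exI[of _ 1] allI ballI) (simp_all, smt (verit))
  then have "0 \<le> evalA W R (\<lambda>p y. V p y - 1) 1 (tr \<phi>) x"
    using assms x by (simp add: validKA_def)
  moreover have "evalA W R (\<lambda>p y. V p y - 1) 1 (tr \<phi>) x = evalL W R V \<phi> x - 1"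
    using evalA_tr_eq_scaled_evalL[OF V_unit _ x] V_unit by simp
  ultimately show "evalL W R V \<phi> x = 1"
    using evalL_unit_interval[OF V_unit x, of R \<phi>] by linarith
qed

theorem proposition2p3:
  fixes \<phi> :: fmL
  shows "validKL TYPE('w) \<phi> \<longleftrightarrow> validKA TYPE('w) (tr \<phi>)"
  using validKA_tr_if_validKL validKL_if_validKA_tr by blast

end
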